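(* Let $\langle E,\rightarrow\rangle$ be a computation and $b$ a predicate. The slice of $\langle E,\rightarrow\rangle$ with respect to $b$ is lean if and only if $b$ is regular (with respect to $\langle E,\rightarrow\rangle$).
   Context: A directed graph's consistent cuts are the vertex subsets $C$ such that for every edge $(u,v)$, $v\in C$ implies $u\in C$. A computation is a directed graph $\langle E, \rightarrow\rangle$ whose vertices (events) are partitioned among processes $p_1,\dots,p_n$, the events of each process totally ordered, each process $p_i$ having an initial event $\bot_i$ (first) and a final event $\top_i$ (last), whose path relation contains Lamport's happened-before relation, and in which all initial events lie in one strongly connected component and all final events lie in one strongly connected component. $\emptyset$ and $E$ are the trivial consistent cuts; a predicate is a boolean function of process variables evaluated on non-trivial consistent cuts (using variable values after all events of the cut are executed). A predicate $b$ is regular if whenever consistent cuts $C_1,C_2$ satisfy $b$, so do $C_1\cap C_2$ and $C_1\cup C_2$. The slice of $\langle E,\rightarrow\rangle$ with respect to $b$ is a directed graph with vertex set $E$ whose set of consistent cuts contains every consistent cut of $\langle E,\rightarrow\rangle$ satisfying $b$ and which has the least number of consistent cuts among all such directed graphs (it is determined up to having the same set of consistent cuts). The slice is lean if every non-trivial consistent cut of the slice satisfies $b$. *)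

theory Defs
  imports Main
begin

definition consistent_cut :: "'e set \<Rightarrow> ('e \<times> 'e) set \<Rightarrow> 'e set \<Rightarrow> bool" where
  "consistent_cut E G C \<longleftrightarrow> C \<subseteq> E \<and> (\<forall>u v. (u, v) \<in> G \<longrightarrow> v \<in> C \<longrightarrow> u \<in> C)"

definition cuts :: "'e set \<Rightarrow> ('e \<times> 'e) set \<Rightarrow> 'e set set" where
  "cuts E G = {C. consistent_cut E G C}"

definition nontrivial_cut :: "'e set \<Rightarrow> 'e set \<Rightarrow> bool" where
  "nontrivial_cut E C \<longleftrightarrow> C \<noteq> {} \<and> C \<noteq> E"

text \<open>Lamport's happened-before relation is (po \<union> msg)^+, and it must
  be contained in the path relation R^+.\<close>

definition computation ::
  "'e set \<Rightarrow> ('e \<times> 'e) set \<Rightarrow> 'p set \<Rightarrow> ('e \<Rightarrow> 'p) \<Rightarrow> ('e \<times> 'e) set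
     \<Rightarrow> ('p \<Rightarrow> 'e) \<Rightarrow> ('p \<Rightarrow> 'e) \<Rightarrow> ('e \<times> 'e) set \<Rightarrow> bool" where
  "computation E R P proc po ini fin msg \<longleftrightarrow>
     finite E \<and> R \<subseteq> E \<times> E \<and> finite P \<and> P \<noteq> {} \<and> proc ` E = P \<and>
     po \<subseteq> E \<times> E \<and> msg \<subseteq> E \<times> E \<and>
     (\<forall>(e, f) \<in> po. proc e = proc f) \<and>
     trans po \<and> irrefl po \<and>
     (\<forall>e\<in>E. \<forall>f\<in>E. proc e = proc f \<longrightarrow> e = f \<or> (e, f) \<in> po \<or> (f, e) \<in> po) \<and>
     (\<forall>p\<in>P. ini p \<in> E \<and> proc (ini p) = p \<and> fin p \<in> E \<and> proc (fin p) = p \<and>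
        (\<forall>e\<in>E. proc e = p \<longrightarrow> e \<noteq> ini p \<longrightarrow> (ini p, e) \<in> po) \<and>
        (\<forall>e\<in>E. proc e = p \<longrightarrow> e \<noteq> fin p \<longrightarrow> (e, fin p) \<in> po)) \<and>
     (po \<union> msg)\<^sup>+ \<subseteq> R\<^sup>+ \<and>
     (\<forall>p\<in>P. \<forall>q\<in>P. (ini p, ini q) \<in> R\<^sup>* \<and> (fin p, fin q) \<in> R\<^sup>*)"

text \<open>A predicate is modelled as a boolean function of the cut (process variables after
  executing all events of the cut are determined by the cut); it is only ever evaluated
  on non-trivial consistent cuts.\<close>

definition sat_cut :: "'e set \<Rightarrow> ('e \<times> 'e) set \<Rightarrow> ('e set \<Rightarrow> bool) \<Rightarrow> 'e set \<Rightarrow> bool" where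
  "sat_cut E R b C \<longleftrightarrow> consistent_cut E R C \<and> nontrivial_cut E C \<and> b C"

definition regular :: "'e set \<Rightarrow> ('e \<times> 'e) set \<Rightarrow> ('e set \<Rightarrow> bool) \<Rightarrow> bool" where
  "regular E R b \<longleftrightarrow>
     (\<forall>C1 C2. sat_cut E R b C1 \<longrightarrow> sat_cut E R b C2 \<longrightarrow>
        sat_cut E R b (C1 \<inter> C2) \<and> sat_cut E R b (C1 \<union> C2))"

definition is_slice ::
  "'e set \<Rightarrow> ('e \<times> 'e) set \<Rightarrow> ('e set \<Rightarrow> bool) \<Rightarrow> ('e \<times> 'e) set \<Rightarrow> bool" where
  "is_slice E R b S \<longleftrightarrow>
     S \<subseteq> E \<times> E \<and> {C. sat_cut E R b C} \<subseteq> cuts E S \<and>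
     (\<forall>S'. S' \<subseteq> E \<times> E \<longrightarrow> {C. sat_cut E R b C} \<subseteq> cuts E S' \<longrightarrow>
        card (cuts E S) \<le> card (cuts E S'))"

definition lean :: "'e set \<Rightarrow> ('e set \<Rightarrow> bool) \<Rightarrow> ('e \<times> 'e) set \<Rightarrow> bool" where
  "lean E b S \<longleftrightarrow> (\<forall>C. consistent_cut E S C \<longrightarrow> nontrivial_cut E C \<longrightarrow> b C)"

end

theory Submission
  imports Defs
begin

text \<open>Consistent cuts of any graph are closed under union and intersection, and in a computation
  the union and intersection of two non-trivial cuts are again non-trivial: a non-empty cut
  contains every initial event and a proper cut misses every final event.  So if the slice is
  lean, the cuts satisfying b are closed under both operations, i.e. b is regular.
  Conversely, if b is regular, the satisfying cuts together with the two trivial ones form a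
  sublattice of the power set of E.  As in Birkhoff's representation theorem, such a sublattice
  is the set of consistent cuts of a graph on E; since the slice has the fewest consistent cuts
  among all graphs whose cuts contain the satisfying ones, its cuts are exactly this
  sublattice, and the slice is lean.\<close>

lemma consistent_cut_Int:
  "consistent_cut E G A \<Longrightarrow> consistent_cut E G B \<Longrightarrow> consistent_cut E G (A \<inter> B)"
  unfolding consistent_cut_def by blast

lemma consistent_cut_Un:
  "consistent_cut E G A \<Longrightarrow> consistent_cut E G B \<Longrightarrow> consistent_cut E G (A \<union> B)"
  unfolding consistent_cut_def by blast

lemma consistent_cut_rtrancl_closed:
  assumes "consistent_cut E G C" "(u, v) \<in> G\<^sup>*" "v \<in> C"
  shows "u \<in> C"
  using assms(2,3)
proof (induction rule: converse_rtrancl_induct)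
  case base
  then show ?case .
next
  case (step u w)
  then show ?case using assms(1) unfolding consistent_cut_def by blast
qed

lemma cuts_subset_Pow: "cuts E G \<subseteq> Pow E"
  unfolding cuts_def consistent_cut_def by auto

lemma finite_cuts: "finite E \<Longrightarrow> finite (cuts E G)"
  by (rule finite_subset[OF cuts_subset_Pow]) simp

lemma trivial_cuts_mem_cuts: "G \<subseteq> E \<times> E \<Longrightarrow> {} \<in> cuts E G \<and> E \<in> cuts E G"
  unfolding cuts_def consistent_cut_def by auto

lemma Inter_mem_if_Int_closed:
  assumes "finite F" "F \<noteq> {}" "F \<subseteq> L" "\<And>A B. A \<in> L \<Longrightarrow> B \<in> L \<Longrightarrow> A \<inter> B \<in> L"
  shows "\<Inter>F \<in> L"
  using assms(1-3)
proof (induction F rule: finite_ne_induct)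
  case (singleton A)
  then show ?case by simp
next
  case (insert A F)
  then show ?case using assms(4) by simp
qed

lemma Union_mem_if_Un_closed:
  assumes "finite F" "F \<subseteq> L" "{} \<in> L" "\<And>A B. A \<in> L \<Longrightarrow> B \<in> L \<Longrightarrow> A \<union> B \<in> L"
  shows "\<Union>F \<in> L"
  using assms(1,2)
proof (induction F rule: finite_induct)
  case empty
  then show ?case using assms(3) by simp
next
  case (insert A F)
  then show ?case using assms(4) by simp
qed

text \<open>The graph has an edge (u, v) whenever every member of L containing v also contains u.
  A cut C of this graph is the union, over its events v, of the least member of L containing v.\<close>

lemma sublattice_Pow_eq_cuts:
  assumes fin: "finite E" and L_Pow: "L \<subseteq> Pow E" and empty: "{} \<in> L" and carrier: "E \<in> L"
    and Int: "\<And>A B. A \<in> L \<Longrightarrow> B \<in> L \<Longrightarrow> A \<inter> B \<in> L"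
    and Un: "\<And>A B. A \<in> L \<Longrightarrow> B \<in> L \<Longrightarrow> A \<union> B \<in> L"
  obtains G where "G \<subseteq> E \<times> E" "cuts E G = L"
proof
  define G where "G = {(u, v). u \<in> E \<and> v \<in> E \<and> (\<forall>C\<in>L. v \<in> C \<longrightarrow> u \<in> C)}"
  define least where "least v = \<Inter>{D \<in> L. v \<in> D}" for v
  have "finite L"
    using L_Pow fin by (meson finite_Pow_iff finite_subset)
  then have least_mem: "least v \<in> L" if "v \<in> E" for v
    unfolding least_def using carrier that by (intro Inter_mem_if_Int_closed[OF _ _ _ Int]) auto
  show "G \<subseteq> E \<times> E"
    unfolding G_def by auto
  show "cuts E G = L"
  proof
    show "L \<subseteq> cuts E G"
      using L_Pow unfolding cuts_def consistent_cut_def G_def by auto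
  next
    show "cuts E G \<subseteq> L"
    proof
      fix C
      assume "C \<in> cuts E G"
      then have C_E: "C \<subseteq> E" and closed: "\<And>u v. (u, v) \<in> G \<Longrightarrow> v \<in> C \<Longrightarrow> u \<in> C"
        unfolding cuts_def consistent_cut_def by auto
      have "least v \<subseteq> C" if "v \<in> C" for v
      proof
        fix u
        assume u: "u \<in> least v"
        have "least v \<subseteq> E"
          using least_mem[of v] that C_E L_Pow by auto
        then have "(u, v) \<in> G"
          using u that C_E unfolding G_def least_def by auto
        then show "u \<in> C"
          using closed that by blast
      qed
      moreover have "v \<in> least v" for v
        unfolding least_def by auto
      ultimately have "C = \<Union>(least ` C)"
        by blast
      also have "\<dots> \<in> L"
        using C_E fin finite_subset least_mem
        by (intro Union_mem_if_Un_closed[OF _ _ empty Un]) auto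
      finally show "C \<in> L" .
    qed
  qed
qed

lemma computation_po_rtrancl:
  assumes "computation E R P proc po ini fin msg" "(e, f) \<in> po"
  shows "(e, f) \<in> R\<^sup>*"
proof -
  have "(e, f) \<in> (po \<union> msg)\<^sup>+"
    using assms(2) by auto
  then have "(e, f) \<in> R\<^sup>+"
    using assms(1) unfolding computation_def by blast
  then show ?thesis
    by simp
qed

lemma computation_ini_rtrancl:
  assumes comp: "computation E R P proc po ini fin msg" and "e \<in> E" "q \<in> P"
  shows "(ini q, e) \<in> R\<^sup>*"
proof -
  let ?p = "proc e"
  have p: "?p \<in> P"
    using comp assms(2) unfolding computation_def by blast
  have "(ini ?p, e) \<in> R\<^sup>*"
  proof (cases "e = ini ?p")
    case False
    then have "(ini ?p, e) \<in> po"
      using comp p assms(2) unfolding computation_def by blast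
    then show ?thesis
      using computation_po_rtrancl[OF comp] by simp
  qed simp
  moreover have "(ini q, ini ?p) \<in> R\<^sup>*"
    using comp p assms(3) unfolding computation_def by blast
  ultimately show ?thesis
    by (rule rtrancl_trans[rotated])
qed

lemma computation_fin_rtrancl:
  assumes comp: "computation E R P proc po ini fin msg" and "e \<in> E" "q \<in> P"
  shows "(e, fin q) \<in> R\<^sup>*"
proof -
  let ?p = "proc e"
  have p: "?p \<in> P"
    using comp assms(2) unfolding computation_def by blast
  have "(e, fin ?p) \<in> R\<^sup>*"
  proof (cases "e = fin ?p")
    case False
    then have "(e, fin ?p) \<in> po"
      using comp p assms(2) unfolding computation_def by blast
    then show ?thesis
      using computation_po_rtrancl[OF comp] by simp
  qed simp
  moreover have "(fin ?p, fin q) \<in> R\<^sup>*"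
    using comp p assms(3) unfolding computation_def by blast
  ultimately show ?thesis
    by (rule rtrancl_trans)
qed

lemma computation_ini_mem_cut:
  assumes comp: "computation E R P proc po ini fin msg"
    and C: "consistent_cut E R C" "C \<noteq> {}" and q: "q \<in> P"
  shows "ini q \<in> C"
proof -
  obtain e where e: "e \<in> C"
    using C(2) by blast
  moreover have "e \<in> E"
    using C(1) e unfolding consistent_cut_def by auto
  ultimately show ?thesis
    using consistent_cut_rtrancl_closed[OF C(1) computation_ini_rtrancl[OF comp _ q]] by blast
qed

lemma computation_fin_notin_cut:
  assumes comp: "computation E R P proc po ini fin msg"
    and C: "consistent_cut E R C" "C \<noteq> E" and q: "q \<in> P"
  shows "fin q \<notin> C"
proof
  assume "fin q \<in> C"
  obtain e where "e \<in> E" "e \<notin> C"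
    using C unfolding consistent_cut_def by auto
  then show False
    using consistent_cut_rtrancl_closed[OF C(1) computation_fin_rtrancl[OF comp _ q] \<open>fin q \<in> C\<close>]
    by blast
qed

lemma computation_nontrivial_cut_Int_Un:
  assumes comp: "computation E R P proc po ini fin msg"
    and A: "consistent_cut E R A" "nontrivial_cut E A"
    and B: "consistent_cut E R B" "nontrivial_cut E B"
  shows "nontrivial_cut E (A \<inter> B)" "nontrivial_cut E (A \<union> B)"
proof -
  obtain q where q: "q \<in> P"
    using comp unfolding computation_def by blast
  have "ini q \<in> A" "ini q \<in> B"
    using A B computation_ini_mem_cut[OF comp _ _ q] unfolding nontrivial_cut_def by auto
  moreover have "fin q \<notin> A" "fin q \<notin> B"
    using A B computation_fin_notin_cut[OF comp _ _ q] unfolding nontrivial_cut_def by auto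
  moreover have "fin q \<in> E"
    using comp q unfolding computation_def by blast
  ultimately show "nontrivial_cut E (A \<inter> B)" "nontrivial_cut E (A \<union> B)"
    unfolding nontrivial_cut_def by auto
qed

lemma slice_sat_cut_consistent:
  "is_slice E R b S \<Longrightarrow> sat_cut E R b C \<Longrightarrow> consistent_cut E S C"
  unfolding is_slice_def cuts_def by auto

lemma regular_if_lean_slice:
  assumes comp: "computation E R P proc po ini fin msg"
    and slice: "is_slice E R b S" and lean: "lean E b S"
  shows "regular E R b"
  unfolding regular_def
proof (intro allI impI conjI)
  fix A B
  assume A: "sat_cut E R b A" and B: "sat_cut E R b B"
  then have cuts_R: "consistent_cut E R A" "consistent_cut E R B"
    and nontrivial: "nontrivial_cut E (A \<inter> B)" "nontrivial_cut E (A \<union> B)"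
    using computation_nontrivial_cut_Int_Un[OF comp] unfolding sat_cut_def by auto
  have "consistent_cut E S (A \<inter> B)" "consistent_cut E S (A \<union> B)"
    using slice_sat_cut_consistent[OF slice] A B consistent_cut_Int consistent_cut_Un by blast+
  then have "b (A \<inter> B)" "b (A \<union> B)"
    using lean nontrivial unfolding lean_def by auto
  then show "sat_cut E R b (A \<inter> B)" "sat_cut E R b (A \<union> B)"
    unfolding sat_cut_def using nontrivial cuts_R consistent_cut_Int consistent_cut_Un by auto
qed

lemma lean_slice_if_regular:
  assumes fin: "finite E" and slice: "is_slice E R b S" and regular: "regular E R b"
  shows "lean E b S"
proof -
  define L where "L = {C. sat_cut E R b C} \<union> {{}, E}"
  have sat_E: "C \<subseteq> E" if "sat_cut E R b C" for C
    using that unfolding sat_cut_def consistent_cut_def by auto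
  obtain G where "G \<subseteq> E \<times> E" "cuts E G = L"
  proof (rule sublattice_Pow_eq_cuts[OF fin])
    show "L \<subseteq> Pow E"
      using sat_E unfolding L_def by auto
    show "{} \<in> L" "E \<in> L"
      unfolding L_def by auto
    show "A \<inter> B \<in> L" if "A \<in> L" "B \<in> L" for A B
      using that regular sat_E unfolding L_def regular_def by (auto simp: Int_absorb1 Int_absorb2)
    show "A \<union> B \<in> L" if "A \<in> L" "B \<in> L" for A B
      using that regular sat_E unfolding L_def regular_def by (auto simp: Un_absorb1 Un_absorb2)
  qed
  then have "card (cuts E S) \<le> card L"
    using slice unfolding is_slice_def L_def by (metis Un_upper1)
  moreover have "L \<subseteq> cuts E S"
    using slice trivial_cuts_mem_cuts unfolding L_def is_slice_def by blast
  ultimately have "cuts E S = L"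
    using card_seteq finite_cuts[OF fin] by blast
  then show ?thesis
    unfolding lean_def L_def cuts_def sat_cut_def nontrivial_cut_def by auto
qed

theorem theorem5:
  fixes E :: "'e set" and R :: "('e \<times> 'e) set" and P :: "'p set"
    and proc :: "'e \<Rightarrow> 'p" and po msg :: "('e \<times> 'e) set"
    and ini fin :: "'p \<Rightarrow> 'e" and b :: "'e set \<Rightarrow> bool" and S :: "('e \<times> 'e) set"
  assumes "computation E R P proc po ini fin msg"
    and "is_slice E R b S"
  shows "lean E b S \<longleftrightarrow> regular E R b"
proof
  assume "lean E b S"
  then show "regular E R b"
    using regular_if_lean_slice assms by blast
next
  assume "regular E R b"
  moreover have "finite E"
    using assms(1) unfolding computation_def by simp
  ultimately show "lean E b S"
    using lean_slice_if_regular assms(2) by blast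
qed

end
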